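(* Let $\Sigma$ be a graded alphabet and $t\in T_\Sigma$. Then the subtree automaton $A_t$ of $t$ realizes the subtree series of $t$: $\mathbb{P}_{A_t}=\mathrm{SubTreeSeries}_t$.
   Context: A graded alphabet is a finite set $\Sigma=\bigcup_{k\in\mathbb{N}}\Sigma_k$; $T_\Sigma$ is the set of trees $f(t_1,\ldots,t_k)$ with $f\in\Sigma_k$. Weights are in the monoid $(\mathbb{N},+)$. A RWTA is $A=(\Sigma,Q,\nu,\delta)$ with $Q$ finite, $\nu:Q\to\mathbb{N}$, $\delta\subseteq\bigcup_k Q\times\Sigma_k\times Q^k$; $\delta(f,q_1,\ldots,q_k)=\{q\mid(q,f,q_1,\ldots,q_k)\in\delta\}$, extended to subsets by union over tuples; $\nu(S)=\sum_{s\in S}\nu(s)$; $\Delta(f(t_1,\ldots,t_k))=\delta(f,\Delta(t_1),\ldots,\Delta(t_k))$; $\mathbb{P}_A(t)=\nu(\Delta(t))$. For $t=f(t_1,\ldots,t_k)$, $\mathrm{SubTree}(t)=\{t\}\cup\bigcup_j\mathrm{SubTree}(t_j)$, and $\mathrm{SubTreeSeries}_t:T_\Sigma\to\mathbb{N}$ is defined inductively by $\mathrm{SubTreeSeries}_t=t+\sum_{1\le j\le k}\mathrm{SubTreeSeries}_{t_j}$ (i.e. $\mathrm{SubTreeSeries}_t(s)$ is the number of nodes of $t$ at which the subtree rooted there equals $s$). The tree $t^\sharp$ is obtained from $t$ by indexing each symbol occurrence with its position in a prefix (preorder) traversal, so all indexed symbols are distinct and keep their arity; $\Sigma_{t^\sharp}$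 is the set of indexed symbols occurring in $t^\sharp$, and $\mathrm{h}$ erases indices ($\mathrm{h}(t^\sharp)=t$). The subtree automaton of $t$ is $A_t=(\Sigma,Q,\nu,\delta)$ with $Q=\mathrm{SubTree}(t^\sharp)$, $\nu(q)=1$ for all $q\in Q$, and for $f\in\Sigma_{t^\sharp}$ of arity $k$ and $t_1,\ldots,t_{k+1}\in Q$: $t_{k+1}\in\delta(\mathrm{h}(f),t_1,\ldots,t_k)$ iff $t_{k+1}=f(t_1,\ldots,t_k)$. *)

theory Defs
  imports Main
begin

datatype 'f tree = Node 'f "'f tree list"

fun wf_tree :: "'f set \<Rightarrow> ('f \<Rightarrow> nat) \<Rightarrow> 'f tree \<Rightarrow> bool" where
  "wf_tree Sig ar (Node f ts) =
     (f \<in> Sig \<and> length ts = ar f \<and> (\<forall>u\<in>set ts. wf_tree Sig ar u))"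

definition graded_alphabet :: "'f set \<Rightarrow> ('f \<Rightarrow> nat) \<Rightarrow> bool" where
  "graded_alphabet Sig ar \<longleftrightarrow> finite Sig"

definition trees :: "'f set \<Rightarrow> ('f \<Rightarrow> nat) \<Rightarrow> 'f tree set" where
  "trees Sig ar = {t. wf_tree Sig ar t}"

fun subtrees :: "'f tree \<Rightarrow> 'f tree set" where
  "subtrees (Node f ts) = insert (Node f ts) (\<Union>u\<in>set ts. subtrees u)"

fun subtree_series :: "'f tree \<Rightarrow> 'f tree \<Rightarrow> nat" where
  "subtree_series (Node f ts) s =
     (if Node f ts = s then 1 else 0) + sum_list (map (\<lambda>u. subtree_series u s) ts)"

fun symbols :: "'f tree \<Rightarrow> 'f set" where
  "symbols (Node f ts) = insert f (\<Union>u\<in>set ts. symbols u)"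

fun tsize :: "'f tree \<Rightarrow> nat" where
  "tsize (Node f ts) = Suc (sum_list (map tsize ts))"

text \<open>idx n t indexes the symbols of t by their positions in a preorder
  traversal, starting with position n at the root.\<close>
fun idx :: "nat \<Rightarrow> 'f tree \<Rightarrow> ('f \<times> nat) tree"
  and idxs :: "nat \<Rightarrow> 'f tree list \<Rightarrow> ('f \<times> nat) tree list" where
  "idx n (Node f ts) = Node (f, n) (idxs (Suc n) ts)"
| "idxs n [] = []"
| "idxs n (u # us) = idx n u # idxs (n + tsize u) us"

definition sharp :: "'f tree \<Rightarrow> ('f \<times> nat) tree" where
  "sharp t = idx 1 t"

definition h :: "'f \<times> nat \<Rightarrow> 'f" where
  "h g = fst g"

record ('f, 'q) rwta =
  states :: "'q set"
  weight :: "'q \<Rightarrow> nat"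
  trans  :: "('q \<times> 'f \<times> 'q list) set"

definition delta_set :: "('q \<times> 'f \<times> 'q list) set \<Rightarrow> 'f \<Rightarrow> 'q set list \<Rightarrow> 'q set" where
  "delta_set \<delta> f Qs = {q. \<exists>qs. length qs = length Qs \<and>
      (\<forall>i<length Qs. qs ! i \<in> Qs ! i) \<and> (q, f, qs) \<in> \<delta>}"

fun Delta :: "('f, 'q) rwta \<Rightarrow> 'f tree \<Rightarrow> 'q set" where
  "Delta A (Node f ts) = delta_set (trans A) f (map (Delta A) ts)"

definition weight_of :: "('f, 'q) rwta \<Rightarrow> 'f tree \<Rightarrow> nat" where
  "weight_of A t = (\<Sum>q\<in>Delta A t. weight A q)"

definition subtree_automaton :: "'f tree \<Rightarrow> ('f, ('f \<times> nat) tree) rwta" where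
  "subtree_automaton t =
     \<lparr> states = subtrees (sharp t),
       weight = (\<lambda>q. 1),
       trans = {(Node g qs, h g, qs) | g qs.
                  g \<in> symbols (sharp t) \<and> set qs \<subseteq> subtrees (sharp t) \<and>
                  Node g qs \<in> subtrees (sharp t)} \<rparr>"

end

theory Submission
  imports Defs
begin

text \<open>A state of the subtree automaton of t is a subtree of t#, and the states reached on
  a tree s are exactly those subtrees of t# whose erasure is s. The preorder indices make
  distinct occurrences of s in t distinct states, so the number of reached states, which is
  the weight since every state has weight 1, is the number of occurrences of s in t.\<close>

abbreviation erase :: "('f \<times> nat) tree \<Rightarrow> 'f tree" where
  "erase \<equiv> map_tree fst"

fun label :: "'a tree \<Rightarrow> 'a" where
  "label (Node g _) = g"

lemma list_all2_conj_map_iff: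
  "list_all2 (\<lambda>x y. P x \<and> f x = y) xs ys \<longleftrightarrow> (\<forall>x\<in>set xs. P x) \<and> map f xs = ys"
  by (induction xs arbitrary: ys) (auto simp: list_all2_Cons1)

lemma subtrees_refl: "T \<in> subtrees T"
  by (cases T) auto

lemma subtrees_trans: "x \<in> subtrees T \<Longrightarrow> subtrees x \<subseteq> subtrees T"
  by (induction T) auto

lemma children_in_subtrees: "Node g qs \<in> subtrees T \<Longrightarrow> set qs \<subseteq> subtrees T"
  using subtrees_trans[of "Node g qs" T] subtrees_refl by fastforce

lemma label_in_symbols: "Node g qs \<in> subtrees T \<Longrightarrow> g \<in> symbols T"
  by (induction T) auto

lemma finite_subtrees: "finite (subtrees T)"
  by (induction T) auto

lemma delta_set_list_all2:
  "delta_set \<delta> f Qs = {q. \<exists>qs. list_all2 (\<in>) qs Qs \<and> (q, f, qs) \<in> \<delta>}"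
  by (auto simp: delta_set_def list_all2_conv_all_nth)

lemma trans_subtree_automaton_iff:
  "(q, f, qs) \<in> trans (subtree_automaton t) \<longleftrightarrow>
   (\<exists>g. q = Node g qs \<and> fst g = f \<and> g \<in> symbols (sharp t) \<and>
        set qs \<subseteq> subtrees (sharp t) \<and> Node g qs \<in> subtrees (sharp t))"
  by (auto simp: subtree_automaton_def h_def)

lemma Delta_subtree_automaton:
  "Delta (subtree_automaton t) s = {q \<in> subtrees (sharp t). erase q = s}"
proof (induction s)
  case (Node f ss)
  let ?A = "subtree_automaton t" and ?S = "subtrees (sharp t)"
  have children: "list_all2 (\<in>) qs (map (Delta ?A) ss) \<longleftrightarrow> set qs \<subseteq> ?S \<and> map erase qs = ss"
    for qs
  proof -
    have "list_all2 (\<in>) qs (map (Delta ?A) ss) \<longleftrightarrow>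
          list_all2 (\<lambda>q s. q \<in> ?S \<and> erase q = s) qs ss"
      unfolding list.rel_map by (intro list.rel_cong) (auto simp: Node.IH)
    then show ?thesis
      by (auto simp: list_all2_conj_map_iff)
  qed
  show ?case
  proof (intro set_eqI iffI)
    fix q
    assume "q \<in> Delta ?A (Node f ss)"
    then show "q \<in> {q \<in> ?S. erase q = Node f ss}"
      by (auto simp: delta_set_list_all2 children trans_subtree_automaton_iff)
  next
    fix q
    assume "q \<in> {q \<in> ?S. erase q = Node f ss}"
    then obtain g qs where q: "q = Node g qs" "Node g qs \<in> ?S" "fst g = f" "map erase qs = ss"
      by (cases q) auto
    then have "(q, f, qs) \<in> trans ?A"
      using children_in_subtrees[OF q(2)] label_in_symbols[OF q(2)]
      by (auto simp: trans_subtree_automaton_iff)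
    with q children_in_subtrees[OF q(2)] show "q \<in> Delta ?A (Node f ss)"
      by (auto simp: delta_set_list_all2 children)
  qed
qed

lemma erase_idx:
  fixes t :: "'f tree" and us :: "'f tree list"
  shows "erase (idx n t) = t" "map erase (idxs n us) = us"
  by (induction n t and n us rule: idx_idxs.induct) auto

lemma index_bounds_idx:
  fixes t :: "'f tree" and us :: "'f tree list"
  shows "q \<in> subtrees (idx n t) \<Longrightarrow> snd (label q) \<in> {n..<n + tsize t}"
    "q \<in> (\<Union>u\<in>set (idxs n us). subtrees u) \<Longrightarrow>
       snd (label q) \<in> {n..<n + sum_list (map tsize us)}"
proof (induction n t and n us arbitrary: q and q rule: idx_idxs.induct)
  case (1 n f ts)
  then show ?case by fastforce
next
  case (2 n)
  then show ?case by simp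
next
  case (3 n u us)
  then show ?case by fastforce
qed

lemma card_erase_preimage_idx:
  fixes t :: "'f tree" and us :: "'f tree list"
  shows "card {q \<in> subtrees (idx n t). erase q = s} = subtree_series t s"
    "card {q \<in> (\<Union>u\<in>set (idxs n us). subtrees u). erase q = s} =
       sum_list (map (\<lambda>u. subtree_series u s) us)"
proof (induction n t and n us rule: idx_idxs.induct)
  case (1 n f ts)
  let ?r = "Node (f, n) (idxs (Suc n) ts)"
  let ?R = "{q \<in> (\<Union>u\<in>set (idxs (Suc n) ts). subtrees u). erase q = s}"
  have "?r \<notin> ?R"
    using index_bounds_idx(2)[of ?r "Suc n" ts] by auto
  moreover have "finite ?R"
    by (auto intro: finite_subset[OF _ finite_UN_I] simp: finite_subtrees)
  moreover have "erase ?r = Node f ts"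
    using erase_idx(1)[of n "Node f ts"] by simp
  then have "{q \<in> subtrees (idx n (Node f ts)). erase q = s} =
             (if Node f ts = s then insert ?r ?R else ?R)"
    by auto
  ultimately show ?case
    using 1 by (simp add: card_insert_if)
next
  case (2 n)
  then show ?case by simp
next
  case (3 n u us)
  let ?A = "{q \<in> subtrees (idx n u). erase q = s}"
  let ?B = "{q \<in> (\<Union>u\<in>set (idxs (n + tsize u) us). subtrees u). erase q = s}"
  have "{q \<in> (\<Union>u\<in>set (idxs n (u # us)). subtrees u). erase q = s} = ?A \<union> ?B"
    by auto
  moreover have "?A \<inter> ?B = {}"
    using index_bounds_idx(1)[of _ n u] index_bounds_idx(2)[of _ "n + tsize u" us]
    by fastforce
  moreover have "finite ?A" "finite ?B"
    by (auto intro: finite_subset[OF _ finite_UN_I] simp: finite_subtrees)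
  ultimately show ?case
    using 3 by (simp add: card_Un_disjoint)
qed

theorem lemma6:
  fixes Sig :: "'f set" and ar :: "'f \<Rightarrow> nat" and t :: "'f tree"
  assumes "graded_alphabet Sig ar"
    and "t \<in> trees Sig ar"
  shows "\<forall>s \<in> trees Sig ar. weight_of (subtree_automaton t) s = subtree_series t s"
proof
  fix s
  have "weight_of (subtree_automaton t) s = card (Delta (subtree_automaton t) s)"
    by (simp add: weight_of_def subtree_automaton_def)
  also have "\<dots> = card {q \<in> subtrees (idx 1 t). erase q = s}"
    by (simp add: Delta_subtree_automaton sharp_def)
  also have "\<dots> = subtree_series t s"
    by (rule card_erase_preimage_idx(1))
  finally show "weight_of (subtree_automaton t) s = subtree_series t s" .
qed

end
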